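(* Let $H$ be a subgroup of $\operatorname{Sym}_n$ with $n\geq 3$ such that $H_2=H_{n-1}=\{\mathrm{id}\}$. Then for every $1\leq i\leq n$ there exist $1\leq j,j'\leq n$ such that $j\neq i$, $j'\neq i$, $x_ix_j\notin A$ and $x_{j'}x_i\notin\tilde A$.
   Context: $H_i=\{\sigma\in H\mid\sigma(i)=i\}$. $x_1,\dots,x_n$ are the free generators of the free monoid $\mathrm{FM}_n$. $A=\{x_{\sigma(n-1)}x_{\sigma(n)}\mid\sigma\in H\}$ and $\tilde A=\{x_{\sigma(1)}x_{\sigma(2)}\mid\sigma\in H\}$. *)

theory Defs
  imports "HOL-Algebra.Sym_Groups"
begin

definition stab :: "(nat \<Rightarrow> nat) set \<Rightarrow> nat \<Rightarrow> (nat \<Rightarrow> nat) set" where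
  "stab H i = {\<sigma> \<in> H. \<sigma> i = i}"

text \<open>Free monoid FM_n on generators x_1..x_n, modelled as words (lists) over the
  alphabet {1..n}, with concatenation as product. The generator x_i is the one-letter word.\<close>
definition gen :: "nat \<Rightarrow> nat list" where
  "gen i = [i]"

definition setA :: "nat \<Rightarrow> (nat \<Rightarrow> nat) set \<Rightarrow> nat list set" where
  "setA n H = {gen (\<sigma> (n - 1)) @ gen (\<sigma> n) | \<sigma>. \<sigma> \<in> H}"

definition setAt :: "(nat \<Rightarrow> nat) set \<Rightarrow> nat list set" where
  "setAt H = {gen (\<sigma> 1) @ gen (\<sigma> 2) | \<sigma>. \<sigma> \<in> H}"

end

theory Submission
  imports Defs
begin

text \<open>If the stabiliser of \<open>k\<close> is trivial, an element of \<open>H\<close> is determined by the image of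
  \<open>k\<close>. Hence each of the sets \<open>A\<close>, \<open>\<tilde>A\<close> contains at most one word with a prescribed letter
  in the position coming from the point with trivial stabiliser; as at least two letters
  different from \<open>x\<^sub>i\<close> are available, one of them is missing.\<close>

lemma eq_if_agree_at_trivial_stab:
  assumes H: "subgroup H (sym_group n)" and stab: "stab H k = {id}"
    and "\<sigma> \<in> H" "\<tau> \<in> H" and agree: "\<sigma> k = \<tau> k"
  shows "\<sigma> = \<tau>"
proof -
  interpret group "sym_group n" by (rule sym_group_is_group)
  have \<tau>_carrier: "\<tau> \<in> carrier (sym_group n)"
    using H \<open>\<tau> \<in> H\<close> subgroup.subset by blast
  then have \<tau>_perm: "\<tau> permutes {1..n}"
    by (simp add: sym_group_carrier)
  have "inv\<^bsub>sym_group n\<^esub> \<tau> \<otimes>\<^bsub>sym_group n\<^esub> \<sigma> \<in> H"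
    using H \<open>\<sigma> \<in> H\<close> \<open>\<tau> \<in> H\<close> subgroup.m_closed subgroup.m_inv_closed by metis
  then have "inv' \<tau> \<circ> \<sigma> \<in> H"
    using \<tau>_carrier by (simp add: sym_group_mult)
  moreover have "(inv' \<tau> \<circ> \<sigma>) k = k"
    using agree \<tau>_perm by (simp add: permutes_inverses(2))
  ultimately have "inv' \<tau> \<circ> \<sigma> = id"
    using stab unfolding stab_def by blast
  then have "\<tau> \<circ> (inv' \<tau> \<circ> \<sigma>) = \<tau>"
    by simp
  then show ?thesis
    using \<tau>_perm by (simp add: o_assoc permutes_inv_o(1))
qed

lemma setA_second_letter_unique:
  assumes "subgroup H (sym_group n)" and "stab H (n - 1) = {id}"
    and "[i, a] \<in> setA n H" "[i, b] \<in> setA n H"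
  shows "a = b"
proof -
  obtain \<sigma> \<tau> where "\<sigma> \<in> H" "\<tau> \<in> H" "\<sigma> (n - 1) = i" "\<sigma> n = a" "\<tau> (n - 1) = i" "\<tau> n = b"
    using assms(3,4) unfolding setA_def gen_def by auto
  then show ?thesis
    using eq_if_agree_at_trivial_stab[OF assms(1,2)] by metis
qed

lemma setAt_first_letter_unique:
  assumes "subgroup H (sym_group n)" and "stab H 2 = {id}"
    and "[a, i] \<in> setAt H" "[b, i] \<in> setAt H"
  shows "a = b"
proof -
  obtain \<sigma> \<tau> where "\<sigma> \<in> H" "\<tau> \<in> H" "\<sigma> 2 = i" "\<sigma> 1 = a" "\<tau> 2 = i" "\<tau> 1 = b"
    using assms(3,4) unfolding setAt_def gen_def by auto
  then show ?thesis
    using eq_if_agree_at_trivial_stab[OF assms(1,2)] by metis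
qed

lemma two_distinct_elements_avoiding:
  assumes "2 < card S"
  obtains a b where "a \<in> S" "b \<in> S" "a \<noteq> b" "a \<noteq> i" "b \<noteq> i"
proof -
  have "finite S" using assms card.infinite by fastforce
  then have "2 \<le> card (S - {i})"
    using assms by (cases "i \<in> S") (auto simp: card_Diff_singleton_if)
  then obtain a b where "a \<in> S - {i}" "b \<in> S - {i}" "a \<noteq> b"
    by (auto simp: numeral_2_eq_2 card_le_Suc_iff)
  then show ?thesis using that by blast
qed

theorem lemma4p3:
  fixes n :: nat and H :: "(nat \<Rightarrow> nat) set"
  assumes "n \<ge> 3"
    and "subgroup H (sym_group n)"
    and "stab H 2 = {id}" and "stab H (n - 1) = {id}"
  shows "\<forall>i\<in>{1..n}. \<exists>j\<in>{1..n}. \<exists>j'\<in>{1..n}. j \<noteq> i \<and> j' \<noteq> i \<and>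
           gen i @ gen j \<notin> setA n H \<and> gen j' @ gen i \<notin> setAt H"
proof
  fix i
  obtain a b where ab: "a \<in> {1..n}" "b \<in> {1..n}" "a \<noteq> b" "a \<noteq> i" "b \<noteq> i"
    using two_distinct_elements_avoiding[of "{1..n}"] \<open>n \<ge> 3\<close> by auto
  obtain j where "j \<in> {a, b}" "[i, j] \<notin> setA n H"
    using setA_second_letter_unique[OF assms(2,4)] \<open>a \<noteq> b\<close> by blast
  moreover obtain j' where "j' \<in> {a, b}" "[j', i] \<notin> setAt H"
    using setAt_first_letter_unique[OF assms(2,3)] \<open>a \<noteq> b\<close> by blast
  ultimately show "\<exists>j\<in>{1..n}. \<exists>j'\<in>{1..n}. j \<noteq> i \<and> j' \<noteq> i \<and>
           gen i @ gen j \<notin> setA n H \<and> gen j' @ gen i \<notin> setAt H"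
    using ab by (intro bexI[of _ j] bexI[of _ j']) (auto simp: gen_def)
qed

end
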